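(* Let $G$ be a group, $\phi\in\mathrm{End}(G)$, and $N\trianglelefteq G$ a normal subgroup with $\phi(N)\subseteq N$. Let $\hat\phi\in\mathrm{End}(G/N)$ be given by $\hat\phi(gN):=\phi(g)N$ and let $\rho:G\to G/N$ be the canonical projection. Then for every $\phi$-cellular automaton $\mathcal{T}:A^G\to A^G$ there exists a unique $\hat\phi$-cellular automaton $\widehat{\mathcal{T}}:A^{G/N}\to A^{G/N}$ such that $\rho^*\circ\widehat{\mathcal{T}}=\mathcal{T}\circ\rho^*$.
   Context: $A$ is a finite set with $|A|\ge 2$. For a group $G$, $A^G$ is the set of functions $G\to A$ with shift action $(g\cdot x)(k):=x(g^{-1}k)$. For groups $G,H$ and $\phi\in\mathrm{Hom}(H,G)$, a $\phi$-cellular automaton is a map $\mathcal{T}:A^G\to A^H$ for which there exist finite $T\subseteq G$ and $\mu:A^T\to A$ with $\mathcal{T}(x)(h)=\mu((\phi(h^{-1})\cdot x)|_T)$ for all $x,h$. For a homomorphism $\rho:G\to G/N$, $\rho^*:A^{G/N}\to A^G$ is $\rho^*(x):=x\circ\rho$. *)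

theory Defs
  imports "HOL-Algebra.Algebra" "HOL-Library.FuncSet"
begin

definition configs :: "('g,'m) monoid_scheme \<Rightarrow> 'a set \<Rightarrow> ('g \<Rightarrow> 'a) set" where
  "configs G A = carrier G \<rightarrow>\<^sub>E A"

definition shift :: "('g,'m) monoid_scheme \<Rightarrow> 'g \<Rightarrow> ('g \<Rightarrow> 'a) \<Rightarrow> ('g \<Rightarrow> 'a)" where
  "shift G g x = (\<lambda>k\<in>carrier G. x (inv\<^bsub>G\<^esub> g \<otimes>\<^bsub>G\<^esub> k))"

definition phi_CA :: "('g,'m) monoid_scheme \<Rightarrow> ('h,'n) monoid_scheme \<Rightarrow> 'a set \<Rightarrow>
    ('h \<Rightarrow> 'g) \<Rightarrow> (('g \<Rightarrow> 'a) \<Rightarrow> ('h \<Rightarrow> 'a)) \<Rightarrow> bool" where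
  "phi_CA G H A \<phi> T \<longleftrightarrow>
     (\<exists>S (\<mu> :: ('g \<Rightarrow> 'a) \<Rightarrow> 'a). finite S \<and> S \<subseteq> carrier G \<and>
        (\<forall>p \<in> S \<rightarrow>\<^sub>E A. \<mu> p \<in> A) \<and>
        (\<forall>x \<in> configs G A. \<forall>h \<in> carrier H.
            T x h = \<mu> (restrict (shift G (\<phi> (inv\<^bsub>H\<^esub> h)) x) S)))"

text \<open>Induced endomorphism of G/N: gN |-> phi(g)N (cosets written N #> g).\<close>
definition quot_endo :: "('g,'m) monoid_scheme \<Rightarrow> 'g set \<Rightarrow> ('g \<Rightarrow> 'g) \<Rightarrow> 'g set \<Rightarrow> 'g set" where
  "quot_endo G N \<phi> C = N #>\<^bsub>G\<^esub> \<phi> (SOME g. g \<in> C)"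

definition pullback :: "('g,'m) monoid_scheme \<Rightarrow> 'g set \<Rightarrow> ('g set \<Rightarrow> 'a) \<Rightarrow> ('g \<Rightarrow> 'a)" where
  "pullback G N x = (\<lambda>g\<in>carrier G. x (N #>\<^bsub>G\<^esub> g))"

end

theory Submission
  imports Defs
begin

text \<open>A local rule \<open>\<mu>\<close> on a finite window \<open>S \<subseteq> G\<close> descends to the window \<open>SN/N\<close> of \<open>G/N\<close>
  by reading a pattern on \<open>SN/N\<close> as the pattern \<open>s \<mapsto> p(sN)\<close> on \<open>S\<close>. Because \<open>\<rho>\<^sup>*\<close> intertwines
  the shifts of \<open>G\<close> and \<open>G/N\<close> and the induced endomorphism \<open>\<phi>'\<close> of \<open>G/N\<close>
  satisfies \<open>\<phi>' \<circ> \<rho> = \<rho> \<circ> \<phi>\<close>, the resulting \<open>\<phi>'\<close>-cellular automaton \<open>T'\<close> satisfies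
  \<open>\<rho>\<^sup>* \<circ> T' = T \<circ> \<rho>\<^sup>*\<close>. Uniqueness holds because \<open>\<rho>\<close> is surjective, so \<open>\<rho>\<^sup>*\<close> is injective.\<close>

lemma (in normal) rcos_in_FactGroup: "x \<in> carrier G \<Longrightarrow> H #> x \<in> carrier (G Mod H)"
  by (simp add: carrier_FactGroup)

lemma (in normal) group_hom_rcos: "group_hom G (G Mod H) (\<lambda>a. H #> a)"
  by (simp add: group_hom.intro group_hom_axioms.intro is_group factorgroup_is_group
      r_coset_hom_Mod)

lemma (in normal) inv_FactGroup_rcos:
  "x \<in> carrier G \<Longrightarrow> inv\<^bsub>G Mod H\<^esub> (H #> x) = H #> inv x"
  using group_hom.hom_inv[OF group_hom_rcos] by simp

text \<open>The hypothesis \<open>\<phi> ` H \<subseteq> H\<close> makes the choice of representative in \<open>quot_endo\<close> irrelevant.\<close>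
lemma (in normal) quot_endo_rcos:
  assumes hom: "\<phi> \<in> hom G G" and inv: "\<phi> ` H \<subseteq> H" and x: "x \<in> carrier G"
  shows "quot_endo G H \<phi> (H #> x) = H #> \<phi> x"
proof -
  let ?y = "SOME y. y \<in> H #> x"
  have "?y \<in> H #> x"
    using rcos_self[OF x subgroup_axioms] by (rule someI)
  then obtain h where h: "h \<in> H" and y: "?y = h \<otimes> x"
    by (auto simp: r_coset_def)
  have hG: "h \<in> carrier G" and \<phi>x: "\<phi> x \<in> carrier G"
    using h x hom subset by (auto simp: hom_def)
  have "\<phi> ?y = \<phi> h \<otimes> \<phi> x"
    using y hom hG x by (simp add: hom_mult)
  then have "\<phi> ?y \<in> H #> \<phi> x"
    using inv h \<phi>x subset by (auto intro: rcosI)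
  then show ?thesis
    unfolding quot_endo_def using repr_independence[OF _ \<phi>x subgroup_axioms] by simp
qed

lemma (in normal) pullback_in_configs:
  "x \<in> configs (G Mod H) A \<Longrightarrow> pullback G H x \<in> configs G A"
  by (auto simp: configs_def pullback_def rcos_in_FactGroup)

lemma (in normal) pullback_shift:
  assumes "h \<in> carrier G"
  shows "shift G h (pullback G H x) = pullback G H (shift (G Mod H) (H #> h) x)"
  using assms
  by (auto simp: shift_def pullback_def inv_FactGroup_rcos rcos_sum rcos_in_FactGroup)

lemma (in normal) pullback_eqD:
  assumes "\<forall>g \<in> carrier G. pullback G H y g = pullback G H z g" and "C \<in> carrier (G Mod H)"
  shows "y C = z C"
  using assms by (auto simp: carrier_FactGroup pullback_def)

lemma (in normal) phi_CA_FactGroup: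
  fixes A :: "'c set"
  assumes hom: "\<phi> \<in> hom G G" and inv: "\<phi> ` H \<subseteq> H" and T: "phi_CA G G A \<phi> T"
  shows "\<exists>Th. phi_CA (G Mod H) (G Mod H) A (quot_endo G H \<phi>) Th
           \<and> (\<forall>x \<in> configs (G Mod H) A. \<forall>g \<in> carrier G.
                 pullback G H (Th x) g = T (pullback G H x) g)"
proof -
  obtain S and \<mu> :: "('a \<Rightarrow> 'c) \<Rightarrow> 'c" where S: "finite S" "S \<subseteq> carrier G"
    and \<mu>A: "\<forall>p \<in> S \<rightarrow>\<^sub>E A. \<mu> p \<in> A"
    and T_rule: "\<forall>x \<in> configs G A. \<forall>g \<in> carrier G.
                   T x g = \<mu> (restrict (shift G (\<phi> (inv g)) x) S)"
    using T unfolding phi_CA_def by blast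
  define S' where "S' = (\<lambda>s. H #> s) ` S"
  define \<mu>' where "\<mu>' = (\<lambda>p. \<mu> (\<lambda>s\<in>S. p (H #> s)))"
  define Th where
    "Th = (\<lambda>x C. \<mu>' (restrict (shift (G Mod H) (quot_endo G H \<phi> (inv\<^bsub>G Mod H\<^esub> C)) x) S'))"
  have "phi_CA (G Mod H) (G Mod H) A (quot_endo G H \<phi>) Th"
    unfolding phi_CA_def
  proof (intro exI conjI ballI)
    show "finite S'" "S' \<subseteq> carrier (G Mod H)"
      using S by (auto simp: S'_def rcos_in_FactGroup)
    fix p assume "p \<in> S' \<rightarrow>\<^sub>E A"
    then have "(\<lambda>s\<in>S. p (H #> s)) \<in> S \<rightarrow>\<^sub>E A" by (auto simp: S'_def)
    then show "\<mu>' p \<in> A" using \<mu>A by (simp add: \<mu>'_def)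
  qed (simp add: Th_def)
  moreover have "pullback G H (Th x) g = T (pullback G H x) g"
    if x: "x \<in> configs (G Mod H) A" and g: "g \<in> carrier G" for x g
  proof -
    have \<phi>g: "\<phi> (inv g) \<in> carrier G"
      using hom g by (auto simp: hom_def)
    have "T (pullback G H x) g = \<mu> (restrict (shift G (\<phi> (inv g)) (pullback G H x)) S)"
      using T_rule pullback_in_configs[OF x] g by blast
    also have "\<dots> = \<mu> (restrict (pullback G H (shift (G Mod H) (H #> \<phi> (inv g)) x)) S)"
      using \<phi>g by (simp add: pullback_shift)
    also have "\<dots> = Th x (H #> g)"
    proof -
      have "quot_endo G H \<phi> (inv\<^bsub>G Mod H\<^esub> (H #> g)) = H #> \<phi> (inv g)"
        using g hom inv by (simp add: inv_FactGroup_rcos quot_endo_rcos)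
      then show ?thesis
        using S by (auto simp: Th_def \<mu>'_def S'_def pullback_def Int_absorb1 intro!: arg_cong[where f = \<mu>] restrict_ext)
    qed
    finally show ?thesis
      using g by (simp add: pullback_def)
  qed
  ultimately show ?thesis by blast
qed

theorem lemma4p3:
  fixes G :: "('g,'m) monoid_scheme" and N :: "'g set" and \<phi> :: "'g \<Rightarrow> 'g"
    and A :: "'a set" and T :: "('g \<Rightarrow> 'a) \<Rightarrow> ('g \<Rightarrow> 'a)"
  assumes "group G" and "finite A" and "card A \<ge> 2"
    and "\<phi> \<in> hom G G" and "N \<lhd> G" and "\<phi> ` N \<subseteq> N"
    and "phi_CA G G A \<phi> T"
  shows "\<exists>Th. phi_CA (G Mod N) (G Mod N) A (quot_endo G N \<phi>) Th
           \<and> (\<forall>x \<in> configs (G Mod N) A. \<forall>g \<in> carrier G.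
                 pullback G N (Th x) g = T (pullback G N x) g)
           \<and> (\<forall>Th'. phi_CA (G Mod N) (G Mod N) A (quot_endo G N \<phi>) Th'
                 \<and> (\<forall>x \<in> configs (G Mod N) A. \<forall>g \<in> carrier G.
                       pullback G N (Th' x) g = T (pullback G N x) g)
                 \<longrightarrow> (\<forall>x \<in> configs (G Mod N) A. \<forall>C \<in> carrier (G Mod N). Th' x C = Th x C))"
proof -
  interpret normal N G by (rule assms(5))
  obtain Th where CA: "phi_CA (G Mod N) (G Mod N) A (quot_endo G N \<phi>) Th"
    and comm: "\<forall>x \<in> configs (G Mod N) A. \<forall>g \<in> carrier G.
                 pullback G N (Th x) g = T (pullback G N x) g"
    using phi_CA_FactGroup[OF assms(4,6,7)] by blast
  have "Th' x C = Th x C"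
    if comm': "\<forall>x \<in> configs (G Mod N) A. \<forall>g \<in> carrier G.
                 pullback G N (Th' x) g = T (pullback G N x) g"
      and "x \<in> configs (G Mod N) A" and "C \<in> carrier (G Mod N)" for Th' x C
    using that comm by (intro pullback_eqD[of "Th' x" "Th x"]) auto
  with CA comm show ?thesis by blast
qed

end
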